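(* Let $d, r, N$ be positive integers, let $\|\cdot\|$ be any norm on $\mathbb{R}^d$ with unit ball $B = \{v \in \mathbb{R}^d : \|v\| \le 1\}$, and for each $i \in [N]$ let $V_i \subseteq B$ be a finite set with $\sum_{v \in V_i} v = 0$ and $|V_i| \ge r$. Then there is an $r$-selection $\chi$ of $(V_i)_{i \in [N]}$ such that \[ \Big\| \sum_{i \in [n]} \chi(i,\ell) \Big\| \le 5d \] for all $n \in [N]$ and $\ell \in [r]$.
   Context: $[n] = \{1, \dots, n\}$. An $r$-selection of $(V_i)_{i \in [N]}$ is a mapping $\chi : [N] \times [r] \to \mathbb{R}^d$ such that for every $i \in [N]$ the set $\{\chi(i,\ell) : \ell \in [r]\}$ is an $r$-element subset of $V_i$ (so $\chi(i,1),\dots,\chi(i,r)$ are $r$ distinct elements of $V_i$). *)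

theory Defs
  imports "HOL-Analysis.Analysis"
begin

definition is_norm :: "('a::real_vector \<Rightarrow> real) \<Rightarrow> bool" where
  "is_norm nrm \<longleftrightarrow>
     (\<forall>x. 0 \<le> nrm x) \<and> (\<forall>x. nrm x = 0 \<longleftrightarrow> x = 0) \<and>
     (\<forall>c x. nrm (c *\<^sub>R x) = \<bar>c\<bar> * nrm x) \<and>
     (\<forall>x y. nrm (x + y) \<le> nrm x + nrm y)"

definition r_selection :: "nat \<Rightarrow> nat \<Rightarrow> (nat \<Rightarrow> 'a set) \<Rightarrow> (nat \<Rightarrow> nat \<Rightarrow> 'a) \<Rightarrow> bool" where
  "r_selection N r V chi \<longleftrightarrow>
     (\<forall>i\<in>{1..N}. inj_on (chi i) {1..r} \<and> chi i ` {1..r} \<subseteq> V i)"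

end

theory Submission
  imports Defs
begin

(* Iterated rounding in the style of Beck and Fiala.  A fractional family assigns weights
   x_i(v) in [0,1] with integral row sums s_i.  While the first k rows have more than d excess
   fractional entries (entries in (0,1) beyond one per row), a dimension count gives a nonzero
   direction, supported on these entries, that fixes all row sums and the prefix sum
   sum_{i<=k} sum_v x_i(v) v; moving along it until an entry reaches 0 or 1 removes a fractional
   entry.  Doing this for k = 1, ..., N in turn and then rounding changes every prefix sum by at
   most twice the excess of its stage, i.e. by at most 2d, since a row with integral sum never
   has exactly one fractional entry.  From x_i(v) = s / |V_i| this yields s-subsets T_i whose
   prefix sums stay within 2d of those of (s / |V_i|) sum V_i, which vanish for s = r.  Splitting
   every T_i into two balanced halves in the same way and recursing gives an r-selection whose
   prefix sums deviate from those of (1/r) sum T_i by at most 2d h(r), where h(r) + 1/r <= 5/2. *)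

context
  fixes nrm :: "'a::real_vector \<Rightarrow> real"
  assumes nrm: "is_norm nrm"
begin

lemma is_norm_zero: "nrm 0 = 0"
  using nrm unfolding is_norm_def by blast

lemma is_norm_nonneg: "0 \<le> nrm x"
  using nrm unfolding is_norm_def by blast

lemma is_norm_scaleR: "nrm (c *\<^sub>R x) = \<bar>c\<bar> * nrm x"
  using nrm unfolding is_norm_def by blast

lemma is_norm_triangle: "nrm (x + y) \<le> nrm x + nrm y"
  using nrm unfolding is_norm_def by blast

lemma is_norm_add_scaleR_le: "nrm (x + c *\<^sub>R y) \<le> nrm x + \<bar>c\<bar> * nrm y"
  using is_norm_triangle[of x "c *\<^sub>R y"] by (simp add: is_norm_scaleR)

lemma is_norm_sum_le: "nrm (sum f A) \<le> (\<Sum>a\<in>A. nrm (f a))"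
proof (induction A rule: infinite_finite_induct)
  case (insert x F)
  then show ?case
    using is_norm_triangle[of "f x" "sum f F"] by simp
qed (auto simp: is_norm_zero)

lemma is_norm_sum_le_add_scaleR:
  assumes "nrm (\<Sum>i\<in>I. a i) \<le> B" and "nrm (\<Sum>i\<in>I. b i) \<le> D"
    and "\<And>i. i \<in> I \<Longrightarrow> f i = a i + c *\<^sub>R b i"
  shows "nrm (\<Sum>i\<in>I. f i) \<le> B + \<bar>c\<bar> * D"
proof -
  have "(\<Sum>i\<in>I. f i) = (\<Sum>i\<in>I. a i) + c *\<^sub>R (\<Sum>i\<in>I. b i)"
    using assms(3) by (simp add: sum.distrib scaleR_sum_right)
  then show ?thesis
    using is_norm_add_scaleR_le assms(1,2) mult_left_mono[OF assms(2) abs_ge_zero, of c]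
    by (smt (verit))
qed

end

section \<open>Balanced directions\<close>

lemma dependent_family_card_gt_DIM:
  fixes w :: "'p \<Rightarrow> 'a::euclidean_space"
  assumes "finite P" and "card P > DIM('a)"
  shows "\<exists>c. (\<exists>p\<in>P. c p \<noteq> 0) \<and> (\<Sum>p\<in>P. c p *\<^sub>R w p) = 0"
proof (cases "inj_on w P")
  case False
  then obtain p p' where pp: "p \<in> P" "p' \<in> P" "p \<noteq> p'" "w p = w p'"
    unfolding inj_on_def by blast
  define c :: "'p \<Rightarrow> real" where "c x = (if x = p then 1 else if x = p' then -1 else 0)" for x
  have "(\<Sum>x\<in>P. c x *\<^sub>R w x) = (\<Sum>x\<in>P. (if x = p then w p else 0) - (if x = p' then w p' else 0))"
    using pp(3,4) by (intro sum.cong) (auto simp: c_def)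
  also have "\<dots> = 0"
    using pp assms(1) by (simp add: sum_subtractf sum.delta)
  finally show ?thesis
    using pp(1) by (intro exI[of _ c]) (auto simp: c_def)
next
  case True
  then have "dependent (w ` P)"
    using assms by (intro dependent_biggerset) (simp_all add: card_image)
  then obtain u where u: "\<exists>v\<in>w ` P. u v \<noteq> 0" "(\<Sum>v\<in>w ` P. u v *\<^sub>R v) = 0"
    using assms(1) by (auto simp: real_vector.dependent_finite)
  have "(\<Sum>p\<in>P. u (w p) *\<^sub>R w p) = 0"
    using u(2) True by (simp add: sum.reindex)
  then show ?thesis
    using u(1) by (intro exI[of _ "u \<circ> w"]) auto
qed

lemma pivot_direction_sums:
  fixes c :: "'a::real_vector \<Rightarrow> real"
  assumes "finite F" and "b \<in> F"
  defines "d \<equiv> \<lambda>v. if v = b then - (\<Sum>u\<in>F - {b}. c u) else c v"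
  shows "(\<Sum>v\<in>F. d v) = 0" and "(\<Sum>v\<in>F. d v *\<^sub>R v) = (\<Sum>u\<in>F - {b}. c u *\<^sub>R (u - b))"
proof -
  have split: "(\<Sum>v\<in>F. g v) = g b + (\<Sum>v\<in>F - {b}. g v)" for g :: "'a \<Rightarrow> 'b::comm_monoid_add"
    using assms(1,2) by (simp add: sum.remove)
  have off_b: "(\<Sum>v\<in>F - {b}. g (d v) v) = (\<Sum>v\<in>F - {b}. g (c v) v)"
    for g :: "real \<Rightarrow> 'a \<Rightarrow> 'b::comm_monoid_add"
    unfolding d_def by (intro sum.cong) auto
  show "(\<Sum>v\<in>F. d v) = 0"
    using split[of d] off_b[of "\<lambda>x v. x"] by (simp add: d_def)
  show "(\<Sum>v\<in>F. d v *\<^sub>R v) = (\<Sum>u\<in>F - {b}. c u *\<^sub>R (u - b))"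
    using split[of "\<lambda>v. d v *\<^sub>R v"] off_b[of "\<lambda>x v. x *\<^sub>R v"]
    by (simp add: d_def scaleR_diff_right sum_subtractf scaleR_sum_left)
qed

lemma exists_balanced_direction:
  fixes F :: "'i \<Rightarrow> 'a::euclidean_space set"
  assumes fin: "finite I" "\<forall>i\<in>I. finite (F i)"
    and big: "(\<Sum>i\<in>I. card (F i) - 1) > DIM('a)"
  shows "\<exists>\<delta>. (\<forall>i v. \<delta> i v \<noteq> 0 \<longrightarrow> i \<in> I \<and> v \<in> F i) \<and> (\<forall>i\<in>I. (\<Sum>v\<in>F i. \<delta> i v) = 0) \<and>
    (\<Sum>i\<in>I. \<Sum>v\<in>F i. \<delta> i v *\<^sub>R v) = 0 \<and> (\<exists>i v. \<delta> i v \<noteq> 0)"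
proof -
  (* With one pivot b i per row there remain more than DIM('a) differences u - b i, so they are
     dependent; a relation among them is a direction with zero row sums once each pivot gets
     minus the sum of the coefficients of its row. *)
  define b where "b i = (SOME v. v \<in> F i)" for i
  have b: "b i \<in> F i" if "F i \<noteq> {}" for i
    using that unfolding b_def by (simp add: some_in_eq)
  define P where "P = Sigma I (\<lambda>i. F i - {b i})"
  have "card (F i - {b i}) = card (F i) - 1" if "i \<in> I" for i
    using b[of i] fin that by (cases "F i = {}") (auto simp: card_Diff_singleton)
  then have "card P = (\<Sum>i\<in>I. card (F i) - 1)"
    unfolding P_def using fin by (simp add: card_SigmaI)
  moreover have "finite P"
    unfolding P_def using fin by auto
  ultimately obtain c where c: "\<exists>p\<in>P. c p \<noteq> 0" "(\<Sum>p\<in>P. c p *\<^sub>R (snd p - b (fst p))) = 0"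
    using dependent_family_card_gt_DIM[of P "\<lambda>p. snd p - b (fst p)"] big by auto
  define \<delta> where "\<delta> i v = (if i \<in> I \<and> v \<in> F i then
      if v = b i then - (\<Sum>u\<in>F i - {b i}. c (i, u)) else c (i, v) else 0)" for i v
  have row: "(\<Sum>v\<in>F i. \<delta> i v) = 0 \<and> (\<Sum>v\<in>F i. \<delta> i v *\<^sub>R v) = (\<Sum>u\<in>F i - {b i}. c (i, u) *\<^sub>R (u - b i))"
    if i: "i \<in> I" for i
  proof (cases "F i = {}")
    case False
    have on_F: "(\<Sum>v\<in>F i. g (\<delta> i v) v)
        = (\<Sum>v\<in>F i. g (if v = b i then - (\<Sum>u\<in>F i - {b i}. c (i, u)) else c (i, v)) v)"
      for g :: "real \<Rightarrow> 'a \<Rightarrow> 'b::comm_monoid_add"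
      using i unfolding \<delta>_def by (intro sum.cong) auto
    have "finite (F i)"
      using fin i by blast
    from pivot_direction_sums[OF this b[OF False], of "\<lambda>u. c (i, u)"] show ?thesis
      using on_F[of "\<lambda>x v. x"] on_F[of "\<lambda>x v. x *\<^sub>R v"] by simp
  qed simp
  have "(\<Sum>i\<in>I. \<Sum>v\<in>F i. \<delta> i v *\<^sub>R v) = (\<Sum>i\<in>I. \<Sum>u\<in>F i - {b i}. c (i, u) *\<^sub>R (u - b i))"
    using row by simp
  also have "\<dots> = 0"
    using c(2) fin unfolding P_def by (simp add: sum.Sigma case_prod_unfold)
  finally have "(\<Sum>i\<in>I. \<Sum>v\<in>F i. \<delta> i v *\<^sub>R v) = 0" .
  moreover from c(1) obtain i u where "(i, u) \<in> P" "c (i, u) \<noteq> 0"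
    by auto
  then have "\<delta> i u \<noteq> 0"
    unfolding \<delta>_def P_def by auto
  moreover have "\<delta> i v \<noteq> 0 \<Longrightarrow> i \<in> I \<and> v \<in> F i" for i v
    unfolding \<delta>_def by (auto split: if_splits)
  ultimately show ?thesis
    using row by blast
qed

lemma step_within_unit_interval:
  fixes y d t :: real
  assumes "0 \<le> y" "y \<le> 1" "0 \<le> t" and reach: "d \<noteq> 0 \<Longrightarrow> t \<le> ((if 0 < d then 1 else 0) - y) / d"
  shows "0 \<le> y + t * d \<and> y + t * d \<le> 1"
proof (cases d "0 :: real" rule: linorder_cases)
  case less
  then have "t \<le> - y / d"
    using reach by simp
  then have "- y / d * d \<le> t * d"
    by (rule mult_right_mono_neg) (use less in simp)
  then have "- y \<le> t * d"
    using less by simp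
  moreover have "t * d \<le> 0"
    using less \<open>0 \<le> t\<close> by (simp add: mult_nonneg_nonpos)
  ultimately show ?thesis
    using assms(1,2) by linarith
next
  case greater
  then have "t * d \<le> 1 - y"
    using reach by (simp add: pos_le_divide_eq)
  moreover have "0 \<le> t * d"
    using greater \<open>0 \<le> t\<close> by simp
  ultimately show ?thesis
    using assms(1,2) by linarith
qed (use assms in simp)

lemma exists_step_to_boundary:
  fixes y \<delta> :: "'p \<Rightarrow> real"
  assumes fin: "finite Q" and y: "\<forall>p\<in>Q. 0 < y p \<and> y p < 1" and nz: "\<exists>p\<in>Q. \<delta> p \<noteq> 0"
  shows "\<exists>t. (\<forall>p\<in>Q. 0 \<le> y p + t * \<delta> p \<and> y p + t * \<delta> p \<le> 1) \<and>
    (\<exists>p\<in>Q. y p + t * \<delta> p = 0 \<or> y p + t * \<delta> p = 1)"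
proof -
  define Q' where "Q' = {p\<in>Q. \<delta> p \<noteq> 0}"
  define reach where "reach p = ((if 0 < \<delta> p then 1 else 0) - y p) / \<delta> p" for p
  have "finite Q'" "Q' \<noteq> {}"
    using fin nz unfolding Q'_def by auto
  then obtain p0 where p0: "p0 \<in> Q'" "reach p0 = Min (reach ` Q')"
    by (metis (mono_tags, lifting) Min_in empty_is_image finite_imageI imageE)
  define t where "t = reach p0"
  have "0 \<le> t"
    using p0(1) y unfolding t_def Q'_def reach_def by (auto simp: divide_pos_pos divide_pos_neg less_imp_le)
  have "0 \<le> y p + t * \<delta> p \<and> y p + t * \<delta> p \<le> 1" if "p \<in> Q" for p
  proof (rule step_within_unit_interval)
    show "t \<le> ((if 0 < \<delta> p then 1 else 0) - y p) / \<delta> p" if "\<delta> p \<noteq> 0"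
      using \<open>p \<in> Q\<close> that p0(2) \<open>finite Q'\<close> unfolding t_def Q'_def reach_def by simp
  qed (use that y \<open>0 \<le> t\<close> in auto)
  moreover have "y p0 + t * \<delta> p0 = 0 \<or> y p0 + t * \<delta> p0 = 1"
    using p0(1) unfolding t_def reach_def Q'_def by auto
  ultimately show ?thesis
    using p0(1) unfolding Q'_def by blast
qed

definition fractional :: "'a set \<Rightarrow> ('a \<Rightarrow> real) \<Rightarrow> 'a set" where
  "fractional W x = {v\<in>W. 0 < x v \<and> x v < 1}"

definition fractional_subset :: "'a set \<Rightarrow> nat \<Rightarrow> ('a \<Rightarrow> real) \<Rightarrow> bool" where
  "fractional_subset W s x \<longleftrightarrow> (\<forall>v\<in>W. 0 \<le> x v \<and> x v \<le> 1) \<and> sum x W = real s"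

definition is_rounding :: "'a set \<Rightarrow> ('a \<Rightarrow> real) \<Rightarrow> 'a set \<Rightarrow> bool" where
  "is_rounding W x T \<longleftrightarrow> T \<subseteq> W \<and> (\<forall>v\<in>W. x v = 1 \<longrightarrow> v \<in> T) \<and> (\<forall>v\<in>W. x v = 0 \<longrightarrow> v \<notin> T)"

definition keeps_integral :: "'a set \<Rightarrow> ('a \<Rightarrow> real) \<Rightarrow> ('a \<Rightarrow> real) \<Rightarrow> bool" where
  "keeps_integral W x y \<longleftrightarrow> (\<forall>v\<in>W. x v = 0 \<or> x v = 1 \<longrightarrow> y v = x v)"

lemma keeps_integral_refl: "keeps_integral W x x"
  unfolding keeps_integral_def by simp

lemma keeps_integral_trans: "keeps_integral W x y \<Longrightarrow> keeps_integral W y z \<Longrightarrow> keeps_integral W x z"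
  unfolding keeps_integral_def by metis

lemma is_rounding_if_keeps_integral: "keeps_integral W x y \<Longrightarrow> is_rounding W y T \<Longrightarrow> is_rounding W x T"
  unfolding keeps_integral_def is_rounding_def by metis

lemma sum_eq_card_ones_plus_sum_fractional:
  assumes "finite W" and "\<forall>v\<in>W. 0 \<le> x v \<and> x v \<le> 1"
  shows "sum x W = real (card {v\<in>W. x v = 1}) + sum x (fractional W x)"
proof -
  have "sum x W = sum x {v\<in>W. x v = 1} + sum x {v\<in>W. x v \<noteq> 1}"
    using sum.Int_Diff[OF assms(1), of x "{v. x v = 1}"] by (simp add: Int_def set_diff_eq)
  moreover have "sum x {v\<in>W. x v = 1} = real (card {v\<in>W. x v = 1})"
    by (simp add: sum.cong[of _ _ x "\<lambda>_. 1"])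
  moreover have "sum x {v\<in>W. x v \<noteq> 1} = sum x (fractional W x)"
    using assms unfolding fractional_def by (intro sum.mono_neutral_cong_right) force+
  ultimately show ?thesis
    by simp
qed

lemma card_fractional_ne_1:
  assumes "finite W" and "fractional_subset W s x"
  shows "card (fractional W x) \<noteq> 1"
proof
  assume "card (fractional W x) = 1"
  then obtain w where w: "fractional W x = {w}"
    by (meson card_1_singletonE)
  then have "0 < x w" "x w < 1"
    unfolding fractional_def by auto
  moreover have "real s = real (card {v\<in>W. x v = 1}) + x w"
    using sum_eq_card_ones_plus_sum_fractional[of W x] assms w
    unfolding fractional_subset_def by simp
  ultimately have "card {v\<in>W. x v = 1} < s" "s < card {v\<in>W. x v = 1} + 1"
    by linarith+
  then show False
    by linarith
qed

lemma exists_rounding: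
  assumes "finite W" and "fractional_subset W s x"
  shows "\<exists>T. is_rounding W x T \<and> card T = s"
proof -
  define ones where "ones = {v\<in>W. x v = 1}"
  have sum_x: "real s = real (card ones) + sum x (fractional W x)"
    using sum_eq_card_ones_plus_sum_fractional[of W x] assms
    unfolding fractional_subset_def ones_def by simp
  have "sum x (fractional W x) \<le> real (card (fractional W x))"
    using sum_mono[of "fractional W x" x "\<lambda>_. 1"] unfolding fractional_def by simp
  moreover have "0 \<le> sum x (fractional W x)"
    by (rule sum_nonneg) (simp add: fractional_def)
  ultimately have "card ones \<le> s" and le: "s - card ones \<le> card (fractional W x)"
    using sum_x by linarith+
  moreover obtain G where G: "G \<subseteq> fractional W x" "card G = s - card ones" "finite G"
    by (rule obtain_subset_with_card_n[OF le])
  moreover have "finite ones" "ones \<inter> G = {}"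
    using G(1) assms(1) unfolding ones_def fractional_def by auto
  ultimately have "card (ones \<union> G) = s"
    by (simp add: card_Un_disjoint)
  moreover have "is_rounding W x (ones \<union> G)"
    using G(1) unfolding is_rounding_def ones_def fractional_def by auto
  ultimately show ?thesis
    by blast
qed

lemma rounding_error_le_card_fractional:
  fixes nrm :: "'a::real_vector \<Rightarrow> real"
  assumes nrm: "is_norm nrm" and "finite W" and ball: "\<forall>v\<in>W. nrm v \<le> 1"
    and x: "\<forall>v\<in>W. 0 \<le> x v \<and> x v \<le> 1" and T: "is_rounding W x T"
  shows "nrm ((\<Sum>v\<in>T. v) - (\<Sum>v\<in>W. x v *\<^sub>R v)) \<le> real (card (fractional W x))"
proof -
  define e where "e v = (if v \<in> T then 1 else 0) - x v" for v
  have "(\<Sum>v\<in>T. v) = (\<Sum>v\<in>W. (if v \<in> T then 1 else 0) *\<^sub>R v)"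
    using T \<open>finite W\<close> unfolding is_rounding_def by (simp add: if_distrib[of "\<lambda>c. c *\<^sub>R _"] sum.If_cases Int_absorb1)
  then have "(\<Sum>v\<in>T. v) - (\<Sum>v\<in>W. x v *\<^sub>R v) = (\<Sum>v\<in>W. e v *\<^sub>R v)"
    unfolding e_def by (simp add: sum_subtractf scaleR_left_diff_distrib)
  also have "\<dots> = (\<Sum>v\<in>fractional W x. e v *\<^sub>R v)"
  proof (rule sum.mono_neutral_right)
    show "\<forall>v\<in>W - fractional W x. e v *\<^sub>R v = 0"
      using x T unfolding e_def fractional_def is_rounding_def by force
  qed (use \<open>finite W\<close> in \<open>auto simp: fractional_def\<close>)
  finally have "nrm ((\<Sum>v\<in>T. v) - (\<Sum>v\<in>W. x v *\<^sub>R v)) \<le> (\<Sum>v\<in>fractional W x. nrm (e v *\<^sub>R v))"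
    using is_norm_sum_le[OF nrm] by simp
  also have "\<dots> \<le> (\<Sum>v\<in>fractional W x. 1)"
  proof (rule sum_mono)
    fix v assume "v \<in> fractional W x"
    then have "\<bar>e v\<bar> \<le> 1" "nrm v \<le> 1"
      using ball unfolding e_def fractional_def by auto
    then show "nrm (e v *\<^sub>R v) \<le> 1"
      using is_norm_nonneg[OF nrm, of v] by (simp add: is_norm_scaleR[OF nrm] mult_le_one)
  qed
  finally show ?thesis
    by simp
qed

section \<open>Iterated rounding of fractional families\<close>

definition fractional_family ::
    "nat \<Rightarrow> (nat \<Rightarrow> 'a set) \<Rightarrow> (nat \<Rightarrow> nat) \<Rightarrow> (nat \<Rightarrow> 'a \<Rightarrow> real) \<Rightarrow> bool" where
  "fractional_family N V s x \<longleftrightarrow> (\<forall>i\<in>{1..N}. fractional_subset (V i) (s i) (x i))"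

definition prefix_sum :: "(nat \<Rightarrow> 'a::real_vector set) \<Rightarrow> (nat \<Rightarrow> 'a \<Rightarrow> real) \<Rightarrow> nat \<Rightarrow> 'a" where
  "prefix_sum V x k = (\<Sum>i\<in>{1..k}. \<Sum>v\<in>V i. x i v *\<^sub>R v)"

definition excess :: "(nat \<Rightarrow> 'a set) \<Rightarrow> (nat \<Rightarrow> 'a \<Rightarrow> real) \<Rightarrow> nat \<Rightarrow> nat" where
  "excess V x k = (\<Sum>i\<in>{1..k}. card (fractional (V i) (x i)) - 1)"

lemma prefix_sum_Suc [simp]:
  "prefix_sum V x (Suc k) = prefix_sum V x k + (\<Sum>v\<in>V (Suc k). x (Suc k) v *\<^sub>R v)"
  unfolding prefix_sum_def by simp

lemma balanced_perturbation:
  fixes V :: "nat \<Rightarrow> 'a::real_vector set"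
  assumes fin: "\<forall>i\<in>{1..N}. finite (V i)" and "k \<le> N" and y: "fractional_family N V s y"
    and supp: "\<And>i v. \<delta> i v \<noteq> 0 \<Longrightarrow> i \<in> {1..k} \<and> v \<in> fractional (V i) (y i)"
    and row: "\<forall>i\<in>{1..k}. (\<Sum>v\<in>fractional (V i) (y i). \<delta> i v) = 0"
    and total: "(\<Sum>i\<in>{1..k}. \<Sum>v\<in>fractional (V i) (y i). \<delta> i v *\<^sub>R v) = 0"
    and range: "\<forall>i\<in>{1..N}. \<forall>v\<in>V i. 0 \<le> y i v + t * \<delta> i v \<and> y i v + t * \<delta> i v \<le> 1"
  defines "z \<equiv> \<lambda>i v. y i v + t * \<delta> i v"
  shows "fractional_family N V s z \<and> (\<forall>i\<in>{1..N}. keeps_integral (V i) (y i) (z i)) \<and>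
    (\<forall>i. i \<notin> {1..k} \<longrightarrow> z i = y i) \<and> prefix_sum V z k = prefix_sum V y k \<and>
    (\<forall>i. fractional (V i) (z i) \<subseteq> fractional (V i) (y i))"
proof -
  have off: "\<delta> i v = 0" if "i \<notin> {1..k} \<or> v \<notin> fractional (V i) (y i)" for i v
    using supp that by blast
  have on_fractional: "(\<Sum>v\<in>V i. g (\<delta> i v) v) = (\<Sum>v\<in>fractional (V i) (y i). g (\<delta> i v) v)"
    if "i \<in> {1..k}" "\<And>v. g 0 v = 0" for i and g :: "real \<Rightarrow> 'a \<Rightarrow> 'b::comm_monoid_add"
    using that fin \<open>k \<le> N\<close> off by (intro sum.mono_neutral_right) (auto simp: fractional_def)
  have "sum (z i) (V i) = sum (y i) (V i)" if "i \<in> {1..N}" for i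
  proof (cases "i \<in> {1..k}")
    case True
    then show ?thesis
      using on_fractional[of i "\<lambda>d v. d"] row unfolding z_def by (simp add: sum.distrib flip: sum_distrib_left)
  qed (simp add: z_def off)
  then have "fractional_family N V s z"
    using y range unfolding fractional_family_def fractional_subset_def z_def by simp
  moreover have "(\<Sum>i\<in>{1..k}. \<Sum>v\<in>V i. (t * \<delta> i v) *\<^sub>R v) = t *\<^sub>R (\<Sum>i\<in>{1..k}. \<Sum>v\<in>V i. \<delta> i v *\<^sub>R v)"
    by (simp add: scaleR_sum_right)
  then have "prefix_sum V z k = prefix_sum V y k"
    using on_fractional[of _ "\<lambda>d v. d *\<^sub>R v"] total
    unfolding prefix_sum_def z_def by (simp add: scaleR_add_left sum.distrib)
  moreover have "\<forall>i\<in>{1..N}. keeps_integral (V i) (y i) (z i)"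
    unfolding keeps_integral_def z_def by (auto simp: off fractional_def)
  moreover have "fractional (V i) (z i) \<subseteq> fractional (V i) (y i)" for i
    using off unfolding z_def fractional_def by force
  ultimately show ?thesis
    unfolding z_def by (auto simp: off)
qed

lemma exists_fewer_fractional:
  fixes V :: "nat \<Rightarrow> 'a::euclidean_space set"
  assumes fin: "\<forall>i\<in>{1..N}. finite (V i)" and "k \<le> N" and y: "fractional_family N V s y"
    and big: "excess V y k > DIM('a)"
  shows "\<exists>z. fractional_family N V s z \<and> (\<forall>i\<in>{1..N}. keeps_integral (V i) (y i) (z i)) \<and>
    (\<forall>i. i \<notin> {1..k} \<longrightarrow> z i = y i) \<and> prefix_sum V z k = prefix_sum V y k \<and>
    (\<Sum>i\<in>{1..k}. card (fractional (V i) (z i))) < (\<Sum>i\<in>{1..k}. card (fractional (V i) (y i)))"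
proof -
  define F where "F i = fractional (V i) (y i)" for i
  have finF: "\<forall>i\<in>{1..k}. finite (F i)"
    using fin \<open>k \<le> N\<close> unfolding F_def fractional_def by auto
  obtain \<delta> where supp: "\<And>i v. \<delta> i v \<noteq> 0 \<Longrightarrow> i \<in> {1..k} \<and> v \<in> F i"
    and row: "\<forall>i\<in>{1..k}. (\<Sum>v\<in>F i. \<delta> i v) = 0" and total: "(\<Sum>i\<in>{1..k}. \<Sum>v\<in>F i. \<delta> i v *\<^sub>R v) = 0"
    and nz: "\<exists>i v. \<delta> i v \<noteq> 0"
    using exists_balanced_direction[of "{1..k}" F] finF big unfolding excess_def F_def by auto
  define Q where "Q = Sigma {1..k} F"
  have "finite Q"
    using finF unfolding Q_def by auto
  moreover have "\<forall>p\<in>Q. 0 < y (fst p) (snd p) \<and> y (fst p) (snd p) < 1"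
    unfolding Q_def F_def fractional_def by auto
  moreover have "\<exists>p\<in>Q. \<delta> (fst p) (snd p) \<noteq> 0"
    using nz supp unfolding Q_def by fastforce
  ultimately obtain t
    where t: "\<forall>p\<in>Q. 0 \<le> y (fst p) (snd p) + t * \<delta> (fst p) (snd p) \<and> y (fst p) (snd p) + t * \<delta> (fst p) (snd p) \<le> 1"
      and hit: "\<exists>p\<in>Q. y (fst p) (snd p) + t * \<delta> (fst p) (snd p) \<in> {0, 1}"
    using exists_step_to_boundary[of Q "\<lambda>p. y (fst p) (snd p)" "\<lambda>p. \<delta> (fst p) (snd p)"] by auto
  have "\<forall>i\<in>{1..N}. \<forall>v\<in>V i. 0 \<le> y i v + t * \<delta> i v \<and> y i v + t * \<delta> i v \<le> 1"
  proof (intro ballI)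
    fix i v assume "i \<in> {1..N}" "v \<in> V i"
    then show "0 \<le> y i v + t * \<delta> i v \<and> y i v + t * \<delta> i v \<le> 1"
      using y t supp[of i v] unfolding fractional_family_def fractional_subset_def Q_def
      by (cases "\<delta> i v = 0") auto
  qed
  define z where "z i v = y i v + t * \<delta> i v" for i v
  have z: "fractional_family N V s z \<and> (\<forall>i\<in>{1..N}. keeps_integral (V i) (y i) (z i)) \<and>
      (\<forall>i. i \<notin> {1..k} \<longrightarrow> z i = y i) \<and> prefix_sum V z k = prefix_sum V y k \<and>
      (\<forall>i. fractional (V i) (z i) \<subseteq> F i)"
    using balanced_perturbation[OF fin \<open>k \<le> N\<close> y] supp row total \<open>\<forall>i\<in>{1..N}. \<forall>v\<in>V i. _\<close>
    unfolding z_def F_def by blast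
  from hit obtain i0 v0 where "i0 \<in> {1..k}" "v0 \<in> F i0" "v0 \<notin> fractional (V i0) (z i0)"
    unfolding Q_def z_def fractional_def by auto
  then have "card (fractional (V i0) (z i0)) < card (F i0)"
    using z finF by (intro psubset_card_mono) auto
  then have "(\<Sum>i\<in>{1..k}. card (fractional (V i) (z i))) < (\<Sum>i\<in>{1..k}. card (F i))"
    using z finF \<open>i0 \<in> {1..k}\<close> by (intro sum_strict_mono_ex1) (auto intro!: card_mono)
  then show ?thesis
    using z unfolding F_def by blast
qed

lemma exists_excess_le_DIM:
  fixes V :: "nat \<Rightarrow> 'a::euclidean_space set"
  assumes fin: "\<forall>i\<in>{1..N}. finite (V i)" and "k \<le> N" and "fractional_family N V s y"
  shows "\<exists>z. fractional_family N V s z \<and> (\<forall>i\<in>{1..N}. keeps_integral (V i) (y i) (z i)) \<and>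
    (\<forall>i. i \<notin> {1..k} \<longrightarrow> z i = y i) \<and> prefix_sum V z k = prefix_sum V y k \<and> excess V z k \<le> DIM('a)"
  using assms(3)
proof (induction "\<Sum>i\<in>{1..k}. card (fractional (V i) (y i))" arbitrary: y rule: less_induct)
  case less
  show ?case
  proof (cases "excess V y k \<le> DIM('a)")
    case True
    then show ?thesis
      using less.prems by (intro exI[of _ y]) (simp add: keeps_integral_refl)
  next
    case False
    then obtain z where z: "fractional_family N V s z" "\<forall>i\<in>{1..N}. keeps_integral (V i) (y i) (z i)"
      "\<forall>i. i \<notin> {1..k} \<longrightarrow> z i = y i" "prefix_sum V z k = prefix_sum V y k"
      "(\<Sum>i\<in>{1..k}. card (fractional (V i) (z i))) < (\<Sum>i\<in>{1..k}. card (fractional (V i) (y i)))"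
      using exists_fewer_fractional[OF fin \<open>k \<le> N\<close> less.prems] by auto
    obtain z' where "fractional_family N V s z'" "\<forall>i\<in>{1..N}. keeps_integral (V i) (z i) (z' i)"
      "\<forall>i. i \<notin> {1..k} \<longrightarrow> z' i = z i" "prefix_sum V z' k = prefix_sum V z k" "excess V z' k \<le> DIM('a)"
      using less.hyps[OF z(5) z(1)] by blast
    with z show ?thesis
      by (intro exI[of _ z']) (auto intro: keeps_integral_trans)
  qed
qed

(* The witness y for the prefix j is the point reached after stage j; every integral entry of it
   survives in x because the later stages only move entries that are still fractional. *)
lemma exists_prefix_balanced_fractional:
  fixes V :: "nat \<Rightarrow> 'a::euclidean_space set"
  assumes fin: "\<forall>i\<in>{1..N}. finite (V i)" and a: "fractional_family N V s a"
  shows "k \<le> N \<Longrightarrow> \<exists>x. fractional_family N V s x \<and> (\<forall>i. i \<notin> {1..k} \<longrightarrow> x i = a i) \<and>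
    prefix_sum V x k = prefix_sum V a k \<and>
    (\<forall>j\<le>k. \<exists>y. fractional_family N V s y \<and> prefix_sum V y j = prefix_sum V a j \<and>
      excess V y j \<le> DIM('a) \<and> (\<forall>i\<in>{1..N}. keeps_integral (V i) (y i) (x i)))"
proof (induction k)
  case 0
  show ?case
    using a by (intro exI[of _ a]) (auto simp: prefix_sum_def excess_def keeps_integral_refl)
next
  case (Suc k)
  then obtain x where x: "fractional_family N V s x" "\<forall>i. i \<notin> {1..k} \<longrightarrow> x i = a i"
    "prefix_sum V x k = prefix_sum V a k"
    "\<forall>j\<le>k. \<exists>y. fractional_family N V s y \<and> prefix_sum V y j = prefix_sum V a j \<and>
      excess V y j \<le> DIM('a) \<and> (\<forall>i\<in>{1..N}. keeps_integral (V i) (y i) (x i))"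
    by auto
  obtain z where z: "fractional_family N V s z" "\<forall>i\<in>{1..N}. keeps_integral (V i) (x i) (z i)"
    "\<forall>i. i \<notin> {1..Suc k} \<longrightarrow> z i = x i" "prefix_sum V z (Suc k) = prefix_sum V x (Suc k)"
    "excess V z (Suc k) \<le> DIM('a)"
    using exists_excess_le_DIM[OF fin \<open>Suc k \<le> N\<close> x(1)] by auto
  have z_prefix: "prefix_sum V z (Suc k) = prefix_sum V a (Suc k)"
    using z(4) x(2,3) by simp
  have "\<exists>y. fractional_family N V s y \<and> prefix_sum V y j = prefix_sum V a j \<and>
      excess V y j \<le> DIM('a) \<and> (\<forall>i\<in>{1..N}. keeps_integral (V i) (y i) (z i))" if j: "j \<le> Suc k" for j
  proof (cases "j = Suc k")
    case True
    then show ?thesis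
      using z z_prefix by (intro exI[of _ z]) (simp add: keeps_integral_refl)
  next
    case False
    then obtain y where "fractional_family N V s y" "prefix_sum V y j = prefix_sum V a j"
      "excess V y j \<le> DIM('a)" "\<forall>i\<in>{1..N}. keeps_integral (V i) (y i) (x i)"
      using x(4) j by (metis le_Suc_eq)
    with z(2) show ?thesis
      by (intro exI[of _ y]) (auto intro: keeps_integral_trans)
  qed
  then show ?case
    using z(1,3) x(2) z_prefix by (intro exI[of _ z]) auto
qed

lemma prefix_rounding_error_le_excess:
  fixes V :: "nat \<Rightarrow> 'a::real_vector set"
  assumes nrm: "is_norm nrm" and fin: "\<forall>i\<in>{1..N}. finite (V i)" and ball: "\<forall>i\<in>{1..N}. \<forall>v\<in>V i. nrm v \<le> 1"
    and "k \<le> N" and y: "fractional_family N V s y" and T: "\<forall>i\<in>{1..N}. is_rounding (V i) (y i) (T i)"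
  shows "nrm (\<Sum>i\<in>{1..k}. (\<Sum>v\<in>T i. v) - (\<Sum>v\<in>V i. y i v *\<^sub>R v)) \<le> 2 * real (excess V y k)"
proof -
  have "nrm ((\<Sum>v\<in>T i. v) - (\<Sum>v\<in>V i. y i v *\<^sub>R v)) \<le> 2 * real (card (fractional (V i) (y i)) - 1)"
    if i: "i \<in> {1..k}" for i
  proof -
    have iN: "i \<in> {1..N}" and yi: "fractional_subset (V i) (s i) (y i)"
      using i \<open>k \<le> N\<close> y unfolding fractional_family_def by auto
    have "card (fractional (V i) (y i)) \<noteq> 1"
      using card_fractional_ne_1 fin iN yi by blast
    moreover have "nrm ((\<Sum>v\<in>T i. v) - (\<Sum>v\<in>V i. y i v *\<^sub>R v)) \<le> real (card (fractional (V i) (y i)))"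
      using yi fin ball T iN unfolding fractional_subset_def by (intro rounding_error_le_card_fractional[OF nrm]) auto
    ultimately show ?thesis
      by (cases "card (fractional (V i) (y i))") auto
  qed
  then have "(\<Sum>i\<in>{1..k}. nrm ((\<Sum>v\<in>T i. v) - (\<Sum>v\<in>V i. y i v *\<^sub>R v)))
      \<le> (\<Sum>i\<in>{1..k}. 2 * real (card (fractional (V i) (y i)) - 1))"
    by (rule sum_mono)
  also have "\<dots> = 2 * real (excess V y k)"
    unfolding excess_def by (simp add: sum_distrib_left)
  finally show ?thesis
    using is_norm_sum_le[OF nrm, of "\<lambda>i. (\<Sum>v\<in>T i. v) - (\<Sum>v\<in>V i. y i v *\<^sub>R v)" "{1..k}"] by linarith
qed

lemma exists_prefix_balanced_rounding:
  fixes V :: "nat \<Rightarrow> 'a::euclidean_space set"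
  assumes nrm: "is_norm nrm" and fin: "\<forall>i\<in>{1..N}. finite (V i)" and ball: "\<forall>i\<in>{1..N}. \<forall>v\<in>V i. nrm v \<le> 1"
    and a: "fractional_family N V s a"
  shows "\<exists>T. (\<forall>i\<in>{1..N}. T i \<subseteq> V i \<and> card (T i) = s i) \<and>
    (\<forall>k\<le>N. nrm (\<Sum>i\<in>{1..k}. (\<Sum>v\<in>T i. v) - (\<Sum>v\<in>V i. a i v *\<^sub>R v)) \<le> 2 * DIM('a))"
proof -
  obtain x where x: "fractional_family N V s x"
    and witness: "\<forall>k\<le>N. \<exists>y. fractional_family N V s y \<and> prefix_sum V y k = prefix_sum V a k \<and>
      excess V y k \<le> DIM('a) \<and> (\<forall>i\<in>{1..N}. keeps_integral (V i) (y i) (x i))"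
    using exists_prefix_balanced_fractional[OF fin a, of N] by auto
  have "\<forall>i\<in>{1..N}. \<exists>T. is_rounding (V i) (x i) T \<and> card T = s i"
    using x fin exists_rounding unfolding fractional_family_def by blast
  then obtain T where T: "\<forall>i\<in>{1..N}. is_rounding (V i) (x i) (T i) \<and> card (T i) = s i"
    by metis
  have "nrm (\<Sum>i\<in>{1..k}. (\<Sum>v\<in>T i. v) - (\<Sum>v\<in>V i. a i v *\<^sub>R v)) \<le> 2 * DIM('a)" if "k \<le> N" for k
  proof -
    obtain y where y: "fractional_family N V s y" "prefix_sum V y k = prefix_sum V a k"
      "excess V y k \<le> DIM('a)" "\<forall>i\<in>{1..N}. keeps_integral (V i) (y i) (x i)"
      using witness \<open>k \<le> N\<close> by blast
    have "(\<Sum>i\<in>{1..k}. (\<Sum>v\<in>T i. v) - (\<Sum>v\<in>V i. a i v *\<^sub>R v))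
        = (\<Sum>i\<in>{1..k}. (\<Sum>v\<in>T i. v) - (\<Sum>v\<in>V i. y i v *\<^sub>R v))"
      using y(2) unfolding prefix_sum_def by (simp add: sum_subtractf)
    moreover have "\<forall>i\<in>{1..N}. is_rounding (V i) (y i) (T i)"
      using T y(4) is_rounding_if_keeps_integral by blast
    ultimately show ?thesis
      using prefix_rounding_error_le_excess[OF nrm fin ball \<open>k \<le> N\<close> y(1)] y(3) by fastforce
  qed
  then show ?thesis
    using T unfolding is_rounding_def by blast
qed

lemma exists_balanced_subsets:
  fixes V :: "nat \<Rightarrow> 'a::euclidean_space set"
  assumes nrm: "is_norm nrm" and fin: "\<forall>i\<in>{1..N}. finite (V i)" and ball: "\<forall>i\<in>{1..N}. \<forall>v\<in>V i. nrm v \<le> 1"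
    and s: "\<forall>i\<in>{1..N}. s \<le> card (V i)"
  shows "\<exists>T. (\<forall>i\<in>{1..N}. T i \<subseteq> V i \<and> card (T i) = s) \<and>
    (\<forall>k\<le>N. nrm (\<Sum>i\<in>{1..k}. (\<Sum>v\<in>T i. v) - (real s / real (card (V i))) *\<^sub>R (\<Sum>v\<in>V i. v)) \<le> 2 * DIM('a))"
proof -
  define a where "a i v = real s / real (card (V i))" for i and v :: 'a
  have "fractional_family N V (\<lambda>_. s) a"
    using s unfolding fractional_family_def fractional_subset_def a_def
    by (auto simp: divide_le_eq_1 of_nat_le_iff)
  from exists_prefix_balanced_rounding[OF nrm fin ball this] show ?thesis
    unfolding a_def by (simp add: scaleR_sum_right)
qed

section \<open>Balanced selections by halving\<close>

(* The recursion needs h(1) = 0 and h(q') + 1/q' <= h(q) for both halves q' of q;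
   5/2 - 3/q satisfies this from q = 2 on. *)
definition tree_bound :: "nat \<Rightarrow> real" where
  "tree_bound q = (if q \<le> 1 then 0 else 5/2 - 3 / real q)"

lemma tree_bound_step:
  assumes "2 \<le> q" and "1 \<le> q'" and "2 * q' \<le> q + 1"
  shows "tree_bound q' + 1 / real q' \<le> tree_bound q"
proof (cases "q' = 1")
  case True
  then show ?thesis
    using assms(1) by (simp add: tree_bound_def field_simps)
next
  case False
  then have "3 * real q' \<le> 2 * real q" "2 \<le> q'"
    using assms by linarith+
  then have "3 / real q \<le> 2 / real q'"
    by (simp add: field_simps)
  then show ?thesis
    using assms \<open>2 \<le> q'\<close> by (simp add: tree_bound_def)
qed

lemma tree_bound_plus_inverse_le: "1 \<le> q \<Longrightarrow> tree_bound q + 1 / real q \<le> 5/2"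
  by (simp add: tree_bound_def field_simps)

(* A centred error against S (sum A, size q) is a centred error against the half T (sum B,
   size q1), or against S - T, plus a multiple of the halving error B - (q1 / q) A. *)
lemma centred_diff_split_first:
  fixes x A B :: "'a::real_vector"
  assumes "q1 \<noteq> 0" and "q \<noteq> 0"
  shows "x - (1 / q) *\<^sub>R A = (x - (1 / q1) *\<^sub>R B) + (1 / q1) *\<^sub>R (B - (q1 / q) *\<^sub>R A)"
  using assms by (simp add: algebra_simps)

lemma centred_diff_split_second:
  fixes x A B :: "'a::real_vector"
  assumes "q2 \<noteq> 0" and "q \<noteq> 0" and "q = q1 + q2"
  shows "x - (1 / q) *\<^sub>R A = (x - (1 / q2) *\<^sub>R (A - B)) + (- 1 / q2) *\<^sub>R (B - (q1 / q) *\<^sub>R A)"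
proof -
  have "1 / q2 - (1 / q2) * (q1 / q) = (q - q1) / (q2 * q)"
    using assms(1,2) by (simp add: field_simps)
  also have "\<dots> = 1 / q"
    using assms by simp
  finally have "(1 / q2) *\<^sub>R A - ((1 / q2) * (q1 / q)) *\<^sub>R A = (1 / q) *\<^sub>R A"
    by (metis scaleR_left_diff_distrib)
  then show ?thesis
    by (simp add: algebra_simps)
qed

definition balanced_selection ::
    "('a::real_vector \<Rightarrow> real) \<Rightarrow> nat \<Rightarrow> nat \<Rightarrow> (nat \<Rightarrow> 'a set) \<Rightarrow> real \<Rightarrow> (nat \<Rightarrow> nat \<Rightarrow> 'a) \<Rightarrow> bool" where
  "balanced_selection nrm N q S B ch \<longleftrightarrow> r_selection N q S ch \<and>
     (\<forall>k\<le>N. \<forall>l\<in>{1..q}. nrm (\<Sum>i\<in>{1..k}. ch i l - (1 / real q) *\<^sub>R (\<Sum>v\<in>S i. v)) \<le> B)"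

lemma r_selection_mono: "r_selection N r T ch \<Longrightarrow> \<forall>i\<in>{1..N}. T i \<subseteq> V i \<Longrightarrow> r_selection N r V ch"
  unfolding r_selection_def by blast

lemma inj_on_append_seq:
  fixes f g :: "nat \<Rightarrow> 'a"
  assumes f: "inj_on f {1..m}" and g: "inj_on g {1..n}" and disj: "f ` {1..m} \<inter> g ` {1..n} = {}"
  shows "inj_on (\<lambda>l. if l \<le> m then f l else g (l - m)) {1..m + n}"
proof (rule inj_onI)
  fix l l' assume l: "l \<in> {1..m + n}" "l' \<in> {1..m + n}"
    and eq: "(if l \<le> m then f l else g (l - m)) = (if l' \<le> m then f l' else g (l' - m))"
  have shift: "j - m \<in> {1..n}" if "j \<in> {1..m + n}" "\<not> j \<le> m" for j
    using that by auto
  have mixed: "f j \<noteq> g (j' - m)" if "j \<in> {1..m}" "j' \<in> {1..m + n}" "\<not> j' \<le> m" for j j'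
    using disj that shift by blast
  consider "l \<le> m" "l' \<le> m" | "\<not> l \<le> m" "\<not> l' \<le> m" | "l \<le> m" "\<not> l' \<le> m" | "\<not> l \<le> m" "l' \<le> m"
    by blast
  then show "l = l'"
  proof cases
    case 1
    then show ?thesis
      using f l eq by (auto dest: inj_onD)
  next
    case 2
    then have "l - m = l' - m"
      using g eq shift[OF l(1)] shift[OF l(2)] by (auto dest: inj_onD)
    then show ?thesis
      using 2 by simp
  next
    case 3
    then show ?thesis
      using mixed[of l l'] l eq by simp
  next
    case 4
    then have "g (l - m) = f l'"
      using eq by simp
    then show ?thesis
      using mixed[of l' l] l 4 by simp
  qed
qed

lemma r_selection_append:
  assumes "\<forall>i\<in>{1..N}. T i \<subseteq> S i" and ch1: "r_selection N q1 T ch1" and ch2: "r_selection N q2 (\<lambda>i. S i - T i) ch2"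
  shows "r_selection N (q1 + q2) S (\<lambda>i l. if l \<le> q1 then ch1 i l else ch2 i (l - q1))"
  unfolding r_selection_def
proof (intro ballI conjI)
  fix i assume i: "i \<in> {1..N}"
  have in_T: "ch1 i ` {1..q1} \<subseteq> T i" and in_diff: "ch2 i ` {1..q2} \<subseteq> S i - T i"
    and inj: "inj_on (ch1 i) {1..q1}" "inj_on (ch2 i) {1..q2}"
    using ch1 ch2 i unfolding r_selection_def by auto
  have "ch1 i ` {1..q1} \<inter> ch2 i ` {1..q2} = {}"
    using in_T in_diff by blast
  with inj show "inj_on (\<lambda>l. if l \<le> q1 then ch1 i l else ch2 i (l - q1)) {1..q1 + q2}"
    by (rule inj_on_append_seq)
  show "(\<lambda>l. if l \<le> q1 then ch1 i l else ch2 i (l - q1)) ` {1..q1 + q2} \<subseteq> S i"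
  proof (rule image_subsetI)
    fix l assume l: "l \<in> {1..q1 + q2}"
    show "(if l \<le> q1 then ch1 i l else ch2 i (l - q1)) \<in> S i"
    proof (cases "l \<le> q1")
      case True
      then have "l \<in> {1..q1}"
        using l by simp
      then have "ch1 i l \<in> T i"
        using in_T by blast
      then show ?thesis
        using True assms(1) i by auto
    next
      case False
      then have "l - q1 \<in> {1..q2}"
        using l by auto
      then have "ch2 i (l - q1) \<in> S i - T i"
        using in_diff by blast
      then show ?thesis
        using False by simp
    qed
  qed
qed

lemma balanced_selection_singleton:
  assumes nrm: "is_norm nrm" and S: "\<forall>i\<in>{1..N}. card (S i) = 1"
  shows "balanced_selection nrm N 1 S 0 (\<lambda>i l. the_elem (S i))"
proof -
  have S_eq: "S i = {the_elem (S i)}" if "i \<in> {1..N}" for i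
    using S that by (metis card_1_singletonE the_elem_eq)
  have "the_elem (S i) - (1 / real 1) *\<^sub>R (\<Sum>v\<in>S i. v) = 0" if "i \<in> {1..N}" for i
    by (subst (2) S_eq[OF that]) simp
  then have "(\<Sum>i\<in>{1..k}. the_elem (S i) - (1 / real 1) *\<^sub>R (\<Sum>v\<in>S i. v)) = 0" if "k \<le> N" for k
    using that by (intro sum.neutral) auto
  then show ?thesis
    using S_eq is_norm_zero[OF nrm] unfolding balanced_selection_def r_selection_def by auto
qed

lemma balanced_selection_append:
  fixes nrm :: "'a::real_vector \<Rightarrow> real"
  assumes nrm: "is_norm nrm" and "0 < q1" and "0 < q2"
    and T: "\<forall>i\<in>{1..N}. T i \<subseteq> S i \<and> finite (S i)"
    and ch1: "balanced_selection nrm N q1 T B1 ch1"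
    and ch2: "balanced_selection nrm N q2 (\<lambda>i. S i - T i) B2 ch2"
    and E: "\<forall>k\<le>N. nrm (\<Sum>i\<in>{1..k}. (\<Sum>v\<in>T i. v) - (real q1 / real (q1 + q2)) *\<^sub>R (\<Sum>v\<in>S i. v)) \<le> D"
    and B1: "B1 + D / real q1 \<le> B" and B2: "B2 + D / real q2 \<le> B"
  shows "balanced_selection nrm N (q1 + q2) S B (\<lambda>i l. if l \<le> q1 then ch1 i l else ch2 i (l - q1))"
proof -
  let ?q = "real (q1 + q2)"
  let ?E = "\<lambda>i. (\<Sum>v\<in>T i. v) - (real q1 / ?q) *\<^sub>R (\<Sum>v\<in>S i. v)"
  have "nrm (\<Sum>i\<in>{1..k}. (if l \<le> q1 then ch1 i l else ch2 i (l - q1)) - (1 / ?q) *\<^sub>R (\<Sum>v\<in>S i. v))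
      \<le> B" if k: "k \<le> N" and l: "l \<in> {1..q1 + q2}" for k l
  proof (cases "l \<le> q1")
    case True
    have "nrm (\<Sum>i\<in>{1..k}. ch1 i l - (1 / ?q) *\<^sub>R (\<Sum>v\<in>S i. v)) \<le> B1 + \<bar>1 / real q1\<bar> * D"
    proof (rule is_norm_sum_le_add_scaleR[OF nrm])
      show "nrm (\<Sum>i\<in>{1..k}. ch1 i l - (1 / real q1) *\<^sub>R (\<Sum>v\<in>T i. v)) \<le> B1"
        using ch1 k l True unfolding balanced_selection_def by auto
      show "nrm (\<Sum>i\<in>{1..k}. ?E i) \<le> D"
        using E k by blast
      show "ch1 i l - (1 / ?q) *\<^sub>R (\<Sum>v\<in>S i. v) = (ch1 i l - (1 / real q1) *\<^sub>R (\<Sum>v\<in>T i. v)) + (1 / real q1) *\<^sub>R ?E i" for i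
        using \<open>0 < q1\<close> by (intro centred_diff_split_first) auto
    qed
    then show ?thesis
      using True B1 by simp
  next
    case False
    then have l': "l - q1 \<in> {1..q2}"
      using l by auto
    have "nrm (\<Sum>i\<in>{1..k}. ch2 i (l - q1) - (1 / ?q) *\<^sub>R (\<Sum>v\<in>S i. v)) \<le> B2 + \<bar>- 1 / real q2\<bar> * D"
    proof (rule is_norm_sum_le_add_scaleR[OF nrm])
      show "nrm (\<Sum>i\<in>{1..k}. ch2 i (l - q1) - (1 / real q2) *\<^sub>R (\<Sum>v\<in>S i - T i. v)) \<le> B2"
        using ch2 k l' unfolding balanced_selection_def by auto
      show "nrm (\<Sum>i\<in>{1..k}. ?E i) \<le> D"
        using E k by blast
      fix i assume "i \<in> {1..k}"
      then have "(\<Sum>v\<in>S i - T i. v) = (\<Sum>v\<in>S i. v) - (\<Sum>v\<in>T i. v)"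
        using T k by (auto intro: sum_diff finite_subset)
      then show "ch2 i (l - q1) - (1 / ?q) *\<^sub>R (\<Sum>v\<in>S i. v)
          = (ch2 i (l - q1) - (1 / real q2) *\<^sub>R (\<Sum>v\<in>S i - T i. v)) + (- 1 / real q2) *\<^sub>R ?E i"
        using \<open>0 < q2\<close> by (simp only:) (rule centred_diff_split_second, auto)
    qed
    then show ?thesis
      using False B2 by simp
  qed
  then show ?thesis
    using r_selection_append[of N T S q1 ch1 q2 ch2] T ch1 ch2 unfolding balanced_selection_def by auto
qed

lemma exists_balanced_halving:
  fixes S :: "nat \<Rightarrow> 'a::euclidean_space set"
  assumes nrm: "is_norm nrm" and S: "\<forall>i\<in>{1..N}. finite (S i) \<and> card (S i) = q1 + q2 \<and> (\<forall>v\<in>S i. nrm v \<le> 1)"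
  shows "\<exists>T. (\<forall>i\<in>{1..N}. T i \<subseteq> S i \<and> card (T i) = q1 \<and> card (S i - T i) = q2) \<and>
    (\<forall>k\<le>N. nrm (\<Sum>i\<in>{1..k}. (\<Sum>v\<in>T i. v) - (real q1 / real (q1 + q2)) *\<^sub>R (\<Sum>v\<in>S i. v)) \<le> 2 * DIM('a))"
proof -
  have "\<forall>i\<in>{1..N}. finite (S i)" "\<forall>i\<in>{1..N}. \<forall>v\<in>S i. nrm v \<le> 1" "\<forall>i\<in>{1..N}. q1 \<le> card (S i)"
    using S by auto
  from exists_balanced_subsets[OF nrm this]
  obtain T where T: "\<forall>i\<in>{1..N}. T i \<subseteq> S i \<and> card (T i) = q1"
    and E: "\<forall>k\<le>N. nrm (\<Sum>i\<in>{1..k}. (\<Sum>v\<in>T i. v) - (real q1 / real (card (S i))) *\<^sub>R (\<Sum>v\<in>S i. v)) \<le> 2 * DIM('a)"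
    by blast
  have "card (S i - T i) = q2" if "i \<in> {1..N}" for i
  proof -
    have "T i \<subseteq> S i" "finite (S i)"
      using T S that by auto
    then have "card (S i - T i) = card (S i) - card (T i)"
      using finite_subset by (intro card_Diff_subset) auto
    then show ?thesis
      using T S that by simp
  qed
  moreover have "nrm (\<Sum>i\<in>{1..k}. (\<Sum>v\<in>T i. v) - (real q1 / real (q1 + q2)) *\<^sub>R (\<Sum>v\<in>S i. v)) \<le> 2 * DIM('a)"
    if "k \<le> N" for k
  proof -
    have "(\<Sum>i\<in>{1..k}. (\<Sum>v\<in>T i. v) - (real q1 / real (card (S i))) *\<^sub>R (\<Sum>v\<in>S i. v))
        = (\<Sum>i\<in>{1..k}. (\<Sum>v\<in>T i. v) - (real q1 / real (q1 + q2)) *\<^sub>R (\<Sum>v\<in>S i. v))"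
      using S that by (intro sum.cong) auto
    with E[rule_format, OF that] show ?thesis
      by simp
  qed
  ultimately show ?thesis
    using T by blast
qed

lemma exists_balanced_selection:
  fixes S :: "nat \<Rightarrow> 'a::euclidean_space set"
  assumes nrm: "is_norm nrm" and "1 \<le> q" and "\<forall>i\<in>{1..N}. finite (S i) \<and> card (S i) = q \<and> (\<forall>v\<in>S i. nrm v \<le> 1)"
  shows "\<exists>ch. balanced_selection nrm N q S (2 * DIM('a) * tree_bound q) ch"
  using assms(2,3)
proof (induction q arbitrary: S rule: less_induct)
  case (less q)
  show ?case
  proof (cases "q = 1")
    case True
    then show ?thesis
      using balanced_selection_singleton[OF nrm, of N S] less.prems by (auto simp: tree_bound_def)
  next
    case False
    define q1 where "q1 = q div 2"
    define q2 where "q2 = q - q1"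
    have q: "2 \<le> q" "1 \<le> q1" "q1 < q" "1 \<le> q2" "q2 < q" "q = q1 + q2" "2 * q1 \<le> q + 1" "2 * q2 \<le> q + 1"
      using False less.prems(1) unfolding q1_def q2_def by auto
    with less.prems(2) obtain T where T: "\<forall>i\<in>{1..N}. T i \<subseteq> S i \<and> card (T i) = q1 \<and> card (S i - T i) = q2"
      and E: "\<forall>k\<le>N. nrm (\<Sum>i\<in>{1..k}. (\<Sum>v\<in>T i. v) - (real q1 / real (q1 + q2)) *\<^sub>R (\<Sum>v\<in>S i. v)) \<le> 2 * DIM('a)"
      using exists_balanced_halving[OF nrm, of N S q1 q2] by auto
    have "\<forall>i\<in>{1..N}. finite (T i) \<and> card (T i) = q1 \<and> (\<forall>v\<in>T i. nrm v \<le> 1)"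
      using T less.prems(2) by (blast intro: rev_finite_subset)
    from less.IH[OF q(3,2) this]
    obtain ch1 where ch1: "balanced_selection nrm N q1 T (2 * DIM('a) * tree_bound q1) ch1"
      by blast
    have "\<forall>i\<in>{1..N}. finite (S i - T i) \<and> card (S i - T i) = q2 \<and> (\<forall>v\<in>S i - T i. nrm v \<le> 1)"
      using T less.prems(2) by auto
    from less.IH[OF q(5,4) this]
    obtain ch2 where ch2: "balanced_selection nrm N q2 (\<lambda>i. S i - T i) (2 * DIM('a) * tree_bound q2) ch2"
      by blast
    have "\<forall>i\<in>{1..N}. T i \<subseteq> S i \<and> finite (S i)"
      using T less.prems(2) by auto
    moreover have "2 * DIM('a) * tree_bound q1 + 2 * DIM('a) / real q1 \<le> 2 * DIM('a) * tree_bound q"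
      and "2 * DIM('a) * tree_bound q2 + 2 * DIM('a) / real q2 \<le> 2 * DIM('a) * tree_bound q"
      using mult_left_mono[OF tree_bound_step[OF q(1,2,7)], of "2 * real DIM('a)"]
        mult_left_mono[OF tree_bound_step[OF q(1,4,8)], of "2 * real DIM('a)"]
      by (simp_all add: distrib_left)
    ultimately have "balanced_selection nrm N (q1 + q2) S (2 * DIM('a) * tree_bound q)
        (\<lambda>i l. if l \<le> q1 then ch1 i l else ch2 i (l - q1))"
      using q(2,4) by (intro balanced_selection_append[OF nrm _ _ _ ch1 ch2 E]) auto
    then show ?thesis
      using q(6) by auto
  qed
qed

lemma exists_balanced_r_selection:
  fixes V :: "nat \<Rightarrow> 'a::euclidean_space set"
  assumes nrm: "is_norm nrm" and "0 < r" and fin: "\<forall>i\<in>{1..N}. finite (V i)"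
    and ball: "\<forall>i\<in>{1..N}. \<forall>v\<in>V i. nrm v \<le> 1" and zero: "\<forall>i\<in>{1..N}. (\<Sum>v\<in>V i. v) = 0"
    and card: "\<forall>i\<in>{1..N}. r \<le> card (V i)"
  shows "\<exists>chi. r_selection N r V chi \<and> (\<forall>n\<in>{1..N}. \<forall>l\<in>{1..r}. nrm (\<Sum>i=1..n. chi i l) \<le> 5 * DIM('a))"
proof -
  from exists_balanced_subsets[OF nrm fin ball card]
  obtain T where T: "\<forall>i\<in>{1..N}. T i \<subseteq> V i \<and> card (T i) = r"
    and E: "\<forall>k\<le>N. nrm (\<Sum>i\<in>{1..k}. (\<Sum>v\<in>T i. v) - (real r / real (card (V i))) *\<^sub>R (\<Sum>v\<in>V i. v)) \<le> 2 * DIM('a)"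
    by blast
  have E': "nrm (\<Sum>i\<in>{1..k}. \<Sum>v\<in>T i. v) \<le> 2 * DIM('a)" if "k \<le> N" for k
  proof -
    have "(\<Sum>i\<in>{1..k}. (\<Sum>v\<in>T i. v) - (real r / real (card (V i))) *\<^sub>R (\<Sum>v\<in>V i. v)) = (\<Sum>i\<in>{1..k}. \<Sum>v\<in>T i. v)"
      using zero that by (intro sum.cong) auto
    with E[rule_format, OF that] show ?thesis
      by simp
  qed
  have "1 \<le> r"
    using \<open>0 < r\<close> by simp
  moreover have "\<forall>i\<in>{1..N}. finite (T i) \<and> card (T i) = r \<and> (\<forall>v\<in>T i. nrm v \<le> 1)"
    using T fin ball by (blast intro: rev_finite_subset)
  ultimately obtain ch where ch: "balanced_selection nrm N r T (2 * DIM('a) * tree_bound r) ch"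
    using exists_balanced_selection[OF nrm] by blast
  have "nrm (\<Sum>i=1..n. ch i l) \<le> 5 * DIM('a)" if "n \<in> {1..N}" "l \<in> {1..r}" for n l
  proof -
    have "nrm (\<Sum>i=1..n. ch i l) \<le> 2 * DIM('a) * tree_bound r + \<bar>1 / real r\<bar> * (2 * DIM('a))"
    proof (rule is_norm_sum_le_add_scaleR[OF nrm])
      show "nrm (\<Sum>i=1..n. ch i l - (1 / real r) *\<^sub>R (\<Sum>v\<in>T i. v)) \<le> 2 * DIM('a) * tree_bound r"
        using ch that unfolding balanced_selection_def by auto
      show "nrm (\<Sum>i=1..n. \<Sum>v\<in>T i. v) \<le> 2 * DIM('a)"
        using E' that by simp
    qed simp
    also have "\<dots> = 2 * DIM('a) * (tree_bound r + 1 / real r)"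
      by (simp add: algebra_simps)
    also have "\<dots> \<le> 2 * DIM('a) * (5 / 2)"
      using tree_bound_plus_inverse_le[of r] \<open>0 < r\<close> by (intro mult_left_mono) auto
    finally show ?thesis
      by simp
  qed
  moreover have "r_selection N r V ch"
    using r_selection_mono[of N r T ch V] ch T unfolding balanced_selection_def by blast
  ultimately show ?thesis
    by blast
qed

theorem corollary6:
  fixes nrm :: "real ^ 'd \<Rightarrow> real"
    and V :: "nat \<Rightarrow> (real ^ 'd) set"
    and r N :: nat
  assumes "is_norm nrm"
    and "0 < r" and "0 < N"
    and "\<And>i. i \<in> {1..N} \<Longrightarrow> finite (V i)"
    and "\<And>i. i \<in> {1..N} \<Longrightarrow> V i \<subseteq> {v. nrm v \<le> 1}"
    and "\<And>i. i \<in> {1..N} \<Longrightarrow> (\<Sum>v\<in>V i. v) = 0"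
    and "\<And>i. i \<in> {1..N} \<Longrightarrow> card (V i) \<ge> r"
  shows "\<exists>chi. r_selection N r V chi \<and>
           (\<forall>n\<in>{1..N}. \<forall>l\<in>{1..r}. nrm (\<Sum>i=1..n. chi i l) \<le> 5 * real CARD('d))"
proof -
  have "\<forall>i\<in>{1..N}. finite (V i)" "\<forall>i\<in>{1..N}. \<forall>v\<in>V i. nrm v \<le> 1"
    "\<forall>i\<in>{1..N}. (\<Sum>v\<in>V i. v) = 0" "\<forall>i\<in>{1..N}. r \<le> card (V i)"
    using assms(4-7) by (auto simp: subset_iff)
  from exists_balanced_r_selection[OF assms(1,2) this] show ?thesis
    by simp
qed

end
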